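(* Let $(\alpha,\beta)\in\Delta_K$, $(\alpha_n,\beta_n)=T^n(\alpha,\beta)$, $\varepsilon_n=\varepsilon(\alpha_n,\beta_n)$, $n\ge0$, and let $\varphi_n:\mathbb{R}^3\to\mathbb{R}^3$, $\varphi_n(\bar{\bar x})=L_{\varepsilon_n}^{-1}\bar{\bar x}$. Let $c_n=\frac{1}{1-\beta_n}$ if $\varepsilon_n\in\{(1,2),(0,2)\}$, $c_n=\frac{1}{1-\alpha_n}$ if $\varepsilon_n\in\{(2,1),(0,1)\}$, and $c_n=\frac{1}{\alpha_n+\beta_n}$ if $\varepsilon_n\in\{(1,0),(2,0)\}$. Then for all $\bar{\bar x}\in\mathbb{R}^3$, \[ \langle\varphi_n\bar{\bar x},\bar{\bar\nu}(\alpha_n,\beta_n)\rangle=\frac{1}{c_n}\langle\bar{\bar x},\bar{\bar\nu}(\alpha_{n+1},\beta_{n+1})\rangle . \]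
   Context: Let $K\subset\mathbb{R}$ be a real cubic number field, $N=N_{K/\mathbb{Q}}$ its norm. Fix $r=p/q$ with $p,q$ positive coprime integers and $3\nmid p$. Let $\Delta_K=\{(\alpha,\beta)\in K^2:\ 1,\alpha,\beta \text{ linearly independent over }\mathbb{Q},\ \alpha,\beta>0,\ \alpha+\beta<1\}$ and $Ind=\{(i,j): i,j\in\{0,1,2\},\ i\neq j\}$. Let $\Delta=\{(x,y)\in\mathbb{R}^2: x,y\ge 0,\ x+y\le 1\}$ and $\triangle(1,2)=\{(x,y)\in\Delta: x\ge y\}$, $\triangle(2,1)=\{x\le y\}$, $\triangle(0,1)=\{2x+y-1\le 0\}$, $\triangle(1,0)=\{2x+y-1\ge 0\}$, $\triangle(0,2)=\{x+2y-1\le0\}$, $\triangle(2,0)=\{x+2y-1\ge 0\}$ (all subsets of $\Delta$). Maps $T_{(i,j)}:\triangle(i,j)\to\Delta$: $T_{(1,2)}(x,y)=(\frac{x-y}{1-y},\frac{y}{1-y})$, $T_{(2,1)}(x,y)=(\frac{x}{1-x},\frac{y-x}{1-x})$, $T_{(0,1)}(x,y)=(\frac{x}{1-x},\frac{y}{1-x})$, $T_{(1,0)}(x,y)=(\frac{2x+y-1}{x+y},\frac{y}{x+y})$, $T_{(0,2)}(x,y)=(\frac{x}{1-y},\frac{y}{1-y})$, $T_{(2,0)}(x,y)=(\frac{x}{x+y},\frac{x+2y-1}{x+y})$. For $(\alpha,\beta)\in\Delta_K$ put $\gamma=1-\alpha-\beta$ and $v_{\{1,2\}}=\frac{\alpha^r\beta^r}{|N(\alpha)N(\beta)|}$,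 $v_{\{0,1\}}=\frac{\alpha^r\gamma^r}{|N(\alpha)N(\gamma)|}$, $v_{\{0,2\}}=\frac{\beta^r\gamma^r}{|N(\beta)N(\gamma)|}$; the maximum is attained at a unique pair $\{i_0,j_0\}$. $\varepsilon(\alpha,\beta)$ is the ordered pair $(i,j)\in Ind$ with $\{i,j\}=\{i_0,j_0\}$ and $(\alpha,\beta)\in\triangle(i,j)$, and $T(\alpha,\beta)=T_{\varepsilon(\alpha,\beta)}(\alpha,\beta)$ (a map $\Delta_K\to\Delta_K$). For $(i,j)\in Ind$, $M_{(i,j)}=(m_{k\ell})_{0\le k,\ell\le2}$ with $m_{k\ell}=1$ if $k=\ell$ or $(k,\ell)=(i,j)$, and $0$ otherwise; and $L_{(i,j)}:=M_{(j,i)}$. For $(\alpha,\beta)\in\Delta_K$, $\bar{\bar\nu}(\alpha,\beta)={}^t(1-\alpha-\beta,\alpha,\beta)$; $\langle\cdot,\cdot\rangle$ is the standard inner product on $\mathbb{R}^3$. *)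

theory Defs
  imports "HOL-Analysis.Analysis"
begin

definition is_subfield_real :: "real set \<Rightarrow> bool" where
  "is_subfield_real K \<longleftrightarrow> 0 \<in> K \<and> 1 \<in> K \<and>
     (\<forall>x\<in>K. \<forall>y\<in>K. x + y \<in> K \<and> x * y \<in> K) \<and>
     (\<forall>x\<in>K. - x \<in> K \<and> inverse x \<in> K)"

definition is_rat_basis3 :: "real set \<Rightarrow> (nat \<Rightarrow> real) \<Rightarrow> bool" where
  "is_rat_basis3 K b \<longleftrightarrow> (\<forall>k<3. b k \<in> K) \<and>
     (\<forall>x\<in>K. \<exists>!c::nat \<Rightarrow> rat. (\<forall>k\<ge>3. c k = 0) \<and> x = (\<Sum>k<3. of_rat (c k) * b k))"

definition real_cubic_field :: "real set \<Rightarrow> bool" where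
  "real_cubic_field K \<longleftrightarrow> is_subfield_real K \<and> (\<exists>b. is_rat_basis3 K b)"

definition cf_basis :: "real set \<Rightarrow> nat \<Rightarrow> real" where
  "cf_basis K = (SOME b. is_rat_basis3 K b)"

definition cf_coord :: "real set \<Rightarrow> real \<Rightarrow> nat \<Rightarrow> rat" where
  "cf_coord K x = (THE c. (\<forall>k\<ge>3. c k = 0) \<and> x = (\<Sum>k<3. of_rat (c k) * cf_basis K k))"

definition det3 :: "(nat \<Rightarrow> nat \<Rightarrow> 'a::comm_ring_1) \<Rightarrow> 'a" where
  "det3 m = m 0 0 * (m 1 1 * m 2 2 - m 1 2 * m 2 1)
          - m 0 1 * (m 1 0 * m 2 2 - m 1 2 * m 2 0)
          + m 0 2 * (m 1 0 * m 2 1 - m 1 1 * m 2 0)"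

definition field_norm :: "real set \<Rightarrow> real \<Rightarrow> rat" where
  "field_norm K a = det3 (\<lambda>k l. cf_coord K (a * cf_basis K l) k)"

definition Delta_K :: "real set \<Rightarrow> (real \<times> real) set" where
  "Delta_K K = {(a, b). a \<in> K \<and> b \<in> K \<and>
     (\<forall>q0 q1 q2 :: rat. of_rat q0 + of_rat q1 * a + of_rat q2 * b = 0 \<longrightarrow>
        q0 = 0 \<and> q1 = 0 \<and> q2 = 0) \<and>
     a > 0 \<and> b > 0 \<and> a + b < 1}"

definition vfun :: "real set \<Rightarrow> real \<Rightarrow> real \<Rightarrow> real \<Rightarrow> real" where
  "vfun K r s t = (s powr r * t powr r) / \<bar>of_rat (field_norm K s) * of_rat (field_norm K t)\<bar>"

text \<open>eps K r (a,b): the ordered pair (i,j) with {i,j} the maximising pair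
  (unique by the paper) and (a,b) in triangle(i,j).\<close>
definition eps :: "real set \<Rightarrow> real \<Rightarrow> real \<times> real \<Rightarrow> nat \<times> nat" where
  "eps K r ab = (let a = fst ab; b = snd ab; g = 1 - a - b;
       v12 = vfun K r a b; v01 = vfun K r a g; v02 = vfun K r b g in
     if v12 \<ge> v01 \<and> v12 \<ge> v02 then (if a \<ge> b then (1, 2) else (2, 1))
     else if v01 \<ge> v02 then (if 2 * a + b - 1 \<le> 0 then (0, 1) else (1, 0))
     else (if a + 2 * b - 1 \<le> 0 then (0, 2) else (2, 0)))"

fun Tij :: "nat \<times> nat \<Rightarrow> real \<times> real \<Rightarrow> real \<times> real" where
  "Tij (i, j) (x, y) =
    (if (i, j) = (1, 2) then ((x - y) / (1 - y), y / (1 - y))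
     else if (i, j) = (2, 1) then (x / (1 - x), (y - x) / (1 - x))
     else if (i, j) = (0, 1) then (x / (1 - x), y / (1 - x))
     else if (i, j) = (1, 0) then ((2 * x + y - 1) / (x + y), y / (x + y))
     else if (i, j) = (0, 2) then (x / (1 - y), y / (1 - y))
     else (x / (x + y), (x + 2 * y - 1) / (x + y)))"

definition Tmap :: "real set \<Rightarrow> real \<Rightarrow> real \<times> real \<Rightarrow> real \<times> real" where
  "Tmap K r ab = Tij (eps K r ab) ab"

definition Mmat :: "nat \<times> nat \<Rightarrow> real^3^3" where
  "Mmat ij = (\<chi> k l. if k = l \<or> (k = of_nat (fst ij) \<and> l = of_nat (snd ij)) then 1 else 0)"

definition Lmat :: "nat \<times> nat \<Rightarrow> real^3^3" where
  "Lmat ij = Mmat (snd ij, fst ij)"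

definition nuvec :: "real \<times> real \<Rightarrow> real^3" where
  "nuvec ab = (\<chi> k. if k = 0 then 1 - fst ab - snd ab else if k = 1 then fst ab else snd ab)"

end

theory Submission
  imports Defs
begin

text \<open>In barycentric coordinates \<open>\<nu> = (1 - \<alpha> - \<beta>, \<alpha>, \<beta>)\<close> the branch \<open>T_(i,j)\<close> replaces
  \<open>\<nu> i\<close> by \<open>\<nu> i - \<nu> j\<close> and renormalises by \<open>1 - \<nu> j = 1/c\<close>. On the other hand
  \<open>L_(i,j) = 1 + E_ji\<close> is unipotent, so \<open>L_(i,j)\<^sup>-\<^sup>1 = 1 - E_ji\<close>, whose transpose performs
  exactly this coordinate subtraction; the identity is then the adjunction
  \<open>\<langle>A x, \<nu>\<rangle> = \<langle>x, A\<^sup>T \<nu>\<rangle>\<close>. The only non-algebraic input is that the orbit stays in the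
  open simplex, so that \<open>1 - \<nu> j \<noteq> 0\<close>: rational independence of the barycentric
  coordinates is preserved by \<open>T\<close> and turns the triangle condition \<open>\<nu> j \<le> \<nu> i\<close> of the
  chosen branch into a strict inequality.\<close>

lemma matrix_inv_eqI:
  fixes A :: "'a::semiring_1^'n^'m"
  assumes "A ** B = mat 1" and "B ** A = mat 1"
  shows "matrix_inv A = B"
proof -
  let ?B' = "matrix_inv A"
  have inv: "A ** ?B' = mat 1 \<and> ?B' ** A = mat 1"
    unfolding matrix_inv_def using assms by (rule someI[where x = B, OF conjI])
  have "?B' = ?B' ** (A ** B)" using assms by simp
  also have "\<dots> = B" using inv by (simp add: matrix_mul_assoc)
  finally show ?thesis .
qed

lemma matrix_add_rdistrib: "(B + C) ** A = B ** A + C ** A"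
  by (vector matrix_matrix_mult_def sum.distrib[symmetric] field_simps)

lemma matrix_diff_ldistrib:
  fixes A :: "'a::ring_1^'n^'m"
  shows "A ** (B - C) = A ** B - A ** C"
  by (vector matrix_matrix_mult_def sum_subtractf[symmetric] field_simps)

lemma matrix_diff_rdistrib:
  fixes A :: "'a::ring_1^'n^'m"
  shows "(B - C) ** A = B ** A - C ** A"
  by (vector matrix_matrix_mult_def sum_subtractf[symmetric] field_simps)

lemma matrix_inv_unipotent:
  fixes N :: "'a::ring_1^'n^'n"
  assumes "N ** N = 0"
  shows "matrix_inv (mat 1 + N) = mat 1 - N"
  by (rule matrix_inv_eqI)
     (simp_all add: matrix_add_ldistrib matrix_add_rdistrib matrix_diff_ldistrib
       matrix_diff_rdistrib assms)

definition elem_matrix :: "'n \<Rightarrow> 'n \<Rightarrow> 'a::semiring_1^'n^'n" where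
  "elem_matrix a b = (\<chi> k l. if k = a \<and> l = b then 1 else 0)"

lemma elem_matrix_square:
  assumes "a \<noteq> b"
  shows "elem_matrix a b ** elem_matrix a b = (0::'a::semiring_1^'n^'n)"
  using assms
  by (auto simp: vec_eq_iff matrix_matrix_mult_def elem_matrix_def if_distrib if_distribR
      cong: if_cong)

lemma transpose_elem_matrix: "transpose (elem_matrix a b) = elem_matrix b a"
  by (auto simp: vec_eq_iff transpose_def elem_matrix_def)

lemma elem_matrix_mult_vec:
  "elem_matrix a b *v v = (\<chi> k. if k = a then v $ b else (0::'a::semiring_1))"
  by (auto simp: vec_eq_iff matrix_vector_mult_def elem_matrix_def if_distrib if_distribR
      cong: if_cong)

definition coord_sub :: "'n \<Rightarrow> 'n \<Rightarrow> 'a::ring_1^'n \<Rightarrow> 'a^'n" where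
  "coord_sub i j v = (\<chi> k. if k = i then v $ i - v $ j else v $ k)"

lemma coord_sub_eq_matrix: "coord_sub i j v = (mat 1 - elem_matrix i j) *v v"
  by (simp add: matrix_vector_mult_diff_rdistrib elem_matrix_mult_vec coord_sub_def vec_eq_iff)

lemma transpose_diff: "transpose (A - B) = transpose A - transpose (B::'a::ab_group_add^'n^'m)"
  by (simp add: transpose_def vec_eq_iff)

lemma inner_matrix_mult_left: "inner (A *v x) y = inner x (transpose A *v (y::real^'n))"
  using dot_lmul_matrix[of x "transpose A" y] by simp

definition Ind :: "(nat \<times> nat) set" where
  "Ind = {(i, j). i < 3 \<and> j < 3 \<and> i \<noteq> j}"

lemma Ind_eq: "Ind = {(1,2), (2,1), (0,1), (1,0), (0,2), (2,0)}"
  by (auto simp: Ind_def less_Suc_eq numeral_eq_Suc)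

lemma Lmat_eq_elem_matrix:
  assumes "(i, j) \<in> Ind"
  shows "Lmat (i, j) = mat 1 + elem_matrix (of_nat j) (of_nat i)"
  using assms unfolding Ind_eq
  by (auto simp: vec_eq_iff Lmat_def Mmat_def mat_def elem_matrix_def)

lemma of_nat_fst_neq_snd_Ind:
  assumes "(i, j) \<in> Ind"
  shows "(of_nat i :: 3) \<noteq> of_nat j"
  using assms unfolding Ind_eq by auto

lemma inner_matrix_inv_Lmat:
  assumes "(i, j) \<in> Ind"
  shows "inner (matrix_inv (Lmat (i, j)) *v x) v = inner x (coord_sub (of_nat i) (of_nat j) v)"
proof -
  have "matrix_inv (Lmat (i, j)) = mat 1 - elem_matrix (of_nat j) (of_nat i)"
    using of_nat_fst_neq_snd_Ind[OF assms]
    by (simp add: Lmat_eq_elem_matrix[OF assms] matrix_inv_unipotent elem_matrix_square)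
  then show ?thesis
    by (simp add: inner_matrix_mult_left coord_sub_eq_matrix transpose_elem_matrix transpose_diff)
qed

lemma nuvec_Tij:
  assumes "(i, j) \<in> Ind" and "nuvec ab $ of_nat j \<noteq> 1"
  shows "nuvec (Tij (i, j) ab)
           = inverse (1 - nuvec ab $ of_nat j) *\<^sub>R coord_sub (of_nat i) (of_nat j) (nuvec ab)"
proof -
  obtain a b where ab: "ab = (a, b)" by fastforce
  from assms show ?thesis
    unfolding ab Ind_eq
    by (elim insertE emptyE;
        simp add: vec_eq_iff forall_3 nuvec_def coord_sub_def divide_simps; simp add: algebra_simps)
qed

definition rat_independent :: "real^'n \<Rightarrow> bool" where
  "rat_independent v \<longleftrightarrow>
     (\<forall>q::'n \<Rightarrow> rat. (\<Sum>k\<in>UNIV. of_rat (q k) * v $ k) = 0 \<longrightarrow> (\<forall>k. q k = 0))"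

lemma rat_independent_scaleR:
  assumes "rat_independent v" and "c \<noteq> 0"
  shows "rat_independent (c *\<^sub>R v)"
  using assms unfolding rat_independent_def
  by (simp add: mult.left_commute[of _ c] flip: sum_distrib_left)

lemma rat_independent_nth_neq:
  assumes "rat_independent v" and "i \<noteq> j"
  shows "v $ i \<noteq> v $ j"
proof
  assume "v $ i = v $ j"
  define q :: "_ \<Rightarrow> rat" where "q = (\<lambda>k. if k = i then 1 else if k = j then -1 else 0)"
  have "(\<Sum>k\<in>UNIV. of_rat (q k) * v $ k) = v $ i - v $ j"
    using \<open>i \<noteq> j\<close> by (simp add: q_def if_distrib if_distribR sum.If_cases)
  with assms \<open>v $ i = v $ j\<close> have "q i = 0"
    unfolding rat_independent_def by simp
  then show False by (simp add: q_def)
qed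

lemma rat_independent_coord_sub:
  assumes indep: "rat_independent v" and "i \<noteq> j"
  shows "rat_independent (coord_sub i j v)"
  unfolding rat_independent_def
proof (rule allI, rule impI)
  fix q :: "_ \<Rightarrow> rat"
  assume rel: "(\<Sum>k\<in>UNIV. of_rat (q k) * coord_sub i j v $ k) = 0"
  define q' where "q' = q(j := q j - q i)"
  have "(\<Sum>k\<in>UNIV. of_rat (q k) * coord_sub i j v $ k)
          = (\<Sum>k\<in>UNIV. of_rat (q k) * v $ k) - of_rat (q i) * v $ j"
    by (simp add: coord_sub_def if_distrib right_diff_distrib sum.If_cases sum_subtractf
        sum.remove[of UNIV i] Compl_eq_Diff_UNIV algebra_simps)
  also have "\<dots> = (\<Sum>k\<in>UNIV. of_rat (q' k) * v $ k)"
    by (simp add: q'_def sum.remove[of UNIV j] of_rat_diff algebra_simps)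
  finally have q': "\<forall>k. q' k = 0"
    using indep rel unfolding rat_independent_def by simp
  then have "q i = 0"
    using \<open>i \<noteq> j\<close> by (metis fun_upd_other q'_def)
  show "\<forall>k. q k = 0"
  proof
    fix k
    have "q k = q' k + (if k = j then q i else 0)" by (simp add: q'_def)
    then show "q k = 0" using q' \<open>q i = 0\<close> by simp
  qed
qed

text \<open>The part of \<open>Delta_K K\<close> that survives without mentioning \<open>K\<close>; it is invariant under \<open>T\<close>.\<close>

definition Delta_indep :: "(real \<times> real) set" where
  "Delta_indep = {ab. rat_independent (nuvec ab) \<and> (\<forall>k. 0 < nuvec ab $ k)}"

lemma Delta_K_subset_Delta_indep: "Delta_K K \<subseteq> Delta_indep"
proof
  fix ab assume "ab \<in> Delta_K K"
  then obtain a b where ab: "ab = (a, b)" and pos: "0 < a" "0 < b" "a + b < 1"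
    and indep: "\<And>q0 q1 q2 :: rat. of_rat q0 + of_rat q1 * a + of_rat q2 * b = 0 \<Longrightarrow>
                  q0 = 0 \<and> q1 = 0 \<and> q2 = 0"
    unfolding Delta_K_def by blast
  have "rat_independent (nuvec (a, b))"
    unfolding rat_independent_def
  proof (rule allI, rule impI)
    fix q :: "3 \<Rightarrow> rat"
    assume "(\<Sum>k\<in>UNIV. of_rat (q k) * nuvec (a, b) $ k) = 0"
    moreover have three: "(3::3) = 0" by simp
    ultimately have "of_rat (q 0) + of_rat (q 1 - q 0) * a + of_rat (q 2 - q 0) * b = 0"
      by (simp add: sum_3 nuvec_def of_rat_diff algebra_simps)
    then have "q 0 = 0 \<and> q 1 - q 0 = 0 \<and> q 2 - q 0 = 0" by (rule indep)
    then show "\<forall>k. q k = 0" by (simp add: forall_3 three)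
  qed
  then show "ab \<in> Delta_indep"
    using pos unfolding ab Delta_indep_def by (simp add: forall_3 nuvec_def)
qed

lemma eps_in_Ind: "eps K r ab \<in> Ind"
  unfolding eps_def Let_def Ind_eq by auto

lemma nuvec_eps_le:
  "nuvec ab $ of_nat (snd (eps K r ab)) \<le> nuvec ab $ of_nat (fst (eps K r ab))"
  unfolding eps_def Let_def by (auto simp: nuvec_def)

lemma nuvec_nth_lt_1:
  assumes "\<forall>k. 0 < nuvec ab $ k"
  shows "nuvec ab $ k < 1"
  using assms exhaust_3[of k] by (auto simp: forall_3 nuvec_def)

lemma Tij_in_Delta_indep:
  assumes ab: "ab \<in> Delta_indep" and ij: "(i, j) \<in> Ind"
    and le: "nuvec ab $ of_nat j \<le> nuvec ab $ of_nat i"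
  shows "Tij (i, j) ab \<in> Delta_indep"
proof -
  let ?\<nu> = "nuvec ab" and ?i = "of_nat i :: 3" and ?j = "of_nat j :: 3"
  have indep: "rat_independent ?\<nu>" and pos: "\<forall>k. 0 < ?\<nu> $ k"
    using ab by (auto simp: Delta_indep_def)
  have "?i \<noteq> ?j" using of_nat_fst_neq_snd_Ind[OF ij] .
  then have "?\<nu> $ ?j < ?\<nu> $ ?i"
    using le rat_independent_nth_neq[OF indep] by (simp add: order_less_le)
  moreover have "?\<nu> $ ?j < 1" using nuvec_nth_lt_1[OF pos] .
  moreover have "rat_independent (inverse (1 - ?\<nu> $ ?j) *\<^sub>R coord_sub ?i ?j ?\<nu>)"
    using \<open>?\<nu> $ ?j < 1\<close> \<open>?i \<noteq> ?j\<close>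
    by (simp add: rat_independent_scaleR rat_independent_coord_sub[OF indep])
  ultimately show ?thesis
    using pos by (simp add: Delta_indep_def nuvec_Tij[OF ij] coord_sub_def)
qed

lemma Tmap_in_Delta_indep: "ab \<in> Delta_indep \<Longrightarrow> Tmap K r ab \<in> Delta_indep"
  unfolding Tmap_def
  using Tij_in_Delta_indep[of ab "fst (eps K r ab)" "snd (eps K r ab)"] eps_in_Ind nuvec_eps_le
  by simp

theorem lemma5p3:
  fixes K :: "real set" and p q :: nat and \<alpha> \<beta> :: real and n :: nat and x :: "real^3"
  assumes "real_cubic_field K"
    and "p > 0" and "q > 0" and "coprime p q" and "\<not> 3 dvd p"
    and "(\<alpha>, \<beta>) \<in> Delta_K K"
  defines "r \<equiv> real p / real q"
  defines "ab \<equiv> \<lambda>m. (Tmap K r ^^ m) (\<alpha>, \<beta>)"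
  defines "e \<equiv> eps K r (ab n)"
  defines "c \<equiv> (if e \<in> {(1,2),(0,2)} then 1 / (1 - snd (ab n))
                else if e \<in> {(2,1),(0,1)} then 1 / (1 - fst (ab n))
                else 1 / (fst (ab n) + snd (ab n)))"
  shows "inner (matrix_inv (Lmat e) *v x) (nuvec (ab n))
           = (1 / c) * inner x (nuvec (ab (Suc n)))"
proof -
  have orbit: "ab m \<in> Delta_indep" for m
    by (induction m)
       (use assms(6) Delta_K_subset_Delta_indep in \<open>auto simp: ab_def Tmap_in_Delta_indep\<close>)
  obtain i j where e: "e = (i, j)" by fastforce
  have ij: "(i, j) \<in> Ind" using eps_in_Ind e unfolding e_def by metis
  let ?d = "1 - nuvec (ab n) $ of_nat j"
  have "?d \<noteq> 0"
    using nuvec_nth_lt_1[of "ab n" "of_nat j"] orbit[of n] by (simp add: Delta_indep_def)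
  moreover have "1 / c = ?d"
    using ij unfolding c_def e Ind_eq by (auto simp: nuvec_def)
  moreover have "ab (Suc n) = Tij (i, j) (ab n)"
    by (simp add: ab_def Tmap_def e[symmetric] e_def)
  ultimately show ?thesis
    by (simp add: e inner_matrix_inv_Lmat[OF ij] nuvec_Tij[OF ij])
qed

end
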